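(* Let $\varepsilon>0$ be a constant, let $k\geq 5$ be a constant integer, and let $G=(V,E)$ be a graph on $n$ vertices with $\delta(G)\geq\left(\frac12+\varepsilon\right)n$. Let $D$ be the random digraph in which each vertex $x\in V$ independently chooses a uniformly random set of $k$ distinct $G$-neighbors $y$ and includes the arcs $(x,y)$; then, independently for each vertex $x$, one of its $k$ out-arcs is chosen uniformly at random and colored blue, and the other $k-1$ are colored green. Let $\Gamma^g$ be the undirected graph on $V$ whose edges are the pairs $\{x,y\}$ such that $(x,y)$ or $(y,x)$ is a green arc. Then there exists $\alpha>0$ such that, with high probability, for every longest path $P$ in $\Gamma^g$ and every endpoint $x$ of $P$, $|EP(P,x)|>\alpha n$.
   Context: Rotations: if $P=(v_1,\dots,v_\ell)$ is a longest path in a graph $H$ and $\{v_\ell,v_t\}\in E(H)$ with $t\neq \ell-1$, then $P'=(v_1,\dots,v_t,v_\ell,v_{\ell-1},\dots,v_{t+1})$ is also a longest path of $H$ with endpoint $v_1$. Starting from $P$ and repeatedly applying such rotations to $P$ and to all paths so created, always keeping the endpoint $x=v_1$ fixed, one obtains a collection of longest paths; $EP(P,x)$ denotes the set of their other endpoints. "With high probability" means with probability tending to $1$ as $n\to\infty$ (over both the choices and the coloring). *)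

theory Defs
  imports "HOL-Probability.Probability"
begin

definition nbhd :: "(nat \<Rightarrow> nat \<Rightarrow> bool) \<Rightarrow> nat \<Rightarrow> nat \<Rightarrow> nat set" where
  "nbhd E n x = {y. y < n \<and> E x y}"

definition simple_graph :: "(nat \<Rightarrow> nat \<Rightarrow> bool) \<Rightarrow> nat \<Rightarrow> bool" where
  "simple_graph E n \<longleftrightarrow> (\<forall>x<n. \<forall>y<n. E x y \<longleftrightarrow> E y x) \<and> (\<forall>x<n. \<not> E x x)"

definition min_degree_at_least :: "(nat \<Rightarrow> nat \<Rightarrow> bool) \<Rightarrow> nat \<Rightarrow> real \<Rightarrow> bool" where
  "min_degree_at_least E n d \<longleftrightarrow> (\<forall>x<n. real (card (nbhd E n x)) \<ge> d)"

text \<open>Random choice of one vertex: a uniform k-set S of G-neighbours (the out-arcs),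
  then a uniform element b of S (the blue arc); the others S - {b} are green.\<close>

definition vertex_choice :: "(nat \<Rightarrow> nat \<Rightarrow> bool) \<Rightarrow> nat \<Rightarrow> nat \<Rightarrow> nat \<Rightarrow> (nat set \<times> nat) pmf" where
  "vertex_choice E n k x =
     pmf_of_set {S. S \<subseteq> nbhd E n x \<and> card S = k}
       \<bind> (\<lambda>S. map_pmf (\<lambda>b. (S, b)) (pmf_of_set S))"

definition random_D :: "(nat \<Rightarrow> nat \<Rightarrow> bool) \<Rightarrow> nat \<Rightarrow> nat \<Rightarrow> (nat \<Rightarrow> nat set \<times> nat) pmf" where
  "random_D E n k = Pi_pmf {..<n} ({}, 0) (vertex_choice E n k)"

definition green_graph :: "(nat \<Rightarrow> nat set \<times> nat) \<Rightarrow> nat \<Rightarrow> nat \<Rightarrow> bool" where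
  "green_graph \<omega> x y \<longleftrightarrow>
     y \<in> fst (\<omega> x) - {snd (\<omega> x)} \<or> x \<in> fst (\<omega> y) - {snd (\<omega> y)}"

definition is_path :: "(nat \<Rightarrow> nat \<Rightarrow> bool) \<Rightarrow> nat \<Rightarrow> nat list \<Rightarrow> bool" where
  "is_path H n xs \<longleftrightarrow> xs \<noteq> [] \<and> distinct xs \<and> set xs \<subseteq> {..<n} \<and>
     (\<forall>i. Suc i < length xs \<longrightarrow> H (xs ! i) (xs ! Suc i))"

definition longest_path :: "(nat \<Rightarrow> nat \<Rightarrow> bool) \<Rightarrow> nat \<Rightarrow> nat list \<Rightarrow> bool" where
  "longest_path H n xs \<longleftrightarrow> is_path H n xs \<and> (\<forall>ys. is_path H n ys \<longrightarrow> length ys \<le> length xs)"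

text \<open>Rotation with fixed first endpoint: P = v_1..v_l, edge {v_l, v_t}, t \<noteq> l-1
  (0-indexed: i = t-1, i+2 < l), giving v_1..v_t, v_l, v_(l-1), ..., v_(t+1).\<close>

definition rotation :: "(nat \<Rightarrow> nat \<Rightarrow> bool) \<Rightarrow> nat list \<Rightarrow> nat list \<Rightarrow> bool" where
  "rotation H xs ys \<longleftrightarrow> (\<exists>i. i + 2 < length xs \<and> H (last xs) (xs ! i) \<and>
       ys = take (Suc i) xs @ rev (drop (Suc i) xs))"

text \<open>EP(P, hd P): other endpoints of all paths obtained from P by repeated rotations.\<close>

definition EP :: "(nat \<Rightarrow> nat \<Rightarrow> bool) \<Rightarrow> nat list \<Rightarrow> nat set" where
  "EP H P = last ` {Q. (rotation H)\<^sup>*\<^sup>* P Q}"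

end

theory Submission
  imports Defs
begin

text \<open>With high probability the green graph expands: every nonempty \<open>S\<close> with \<open>|S| \<le> \<alpha> n\<close>
  has more than \<open>2 |S|\<close> neighbours outside \<open>S\<close>. Otherwise all green arcs leaving \<open>S\<close> end in
  \<open>S \<union> U\<close> for some \<open>2 |S|\<close>-set \<open>U\<close>; as every vertex picks at least four green arcs among
  at least \<open>n/2\<close> neighbours, this has probability at most \<open>(12 s / n)^(4 s)\<close>, and the union
  bound over \<open>S\<close> and \<open>U\<close> is \<open>O(1/n)\<close>. In an expander P\'osa's lemma gives the claim:
  every vertex outside \<open>R = EP(P, x)\<close> adjacent to \<open>R\<close> is a neighbour on \<open>P\<close> of a vertex
  of \<open>R\<close>, so \<open>R\<close> has at most \<open>2 |R|\<close> outside neighbours and hence \<open>|R| > \<alpha> n\<close>.\<close>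

lemma measure_pmf_bind_pmf_of_set:
  assumes "finite K" "K \<noteq> {}"
  shows "measure_pmf.prob (pmf_of_set K \<bind> f) A = (\<Sum>S\<in>K. measure_pmf.prob (f S) A) / card K"
proof -
  have "emeasure (measure_pmf (pmf_of_set K \<bind> f)) A = (\<Sum>S\<in>K. emeasure (f S) A) / card K"
    using assms by (simp add: nn_integral_pmf_of_set)
  also have "\<dots> = ennreal ((\<Sum>S\<in>K. measure_pmf.prob (f S) A) / real (card K))"
    using assms by (simp add: measure_pmf.emeasure_eq_measure ennreal_of_nat_eq_real_of_nat
        sum_ennreal divide_ennreal sum_nonneg card_gt_0_iff)
  finally show ?thesis
    by (simp add: measure_pmf.emeasure_eq_measure sum_nonneg divide_nonneg_nonneg)
qed

lemma binomial_ratio_le_power: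
  assumes "m \<le> D"
  shows "real (m choose j) * real D ^ j \<le> real (D choose j) * real m ^ j"
proof (induction j)
  case 0
  then show ?case by simp
next
  case (Suc j)
  have factor: "real (m - j) * real D \<le> real (D - j) * real m"
  proof (cases "j \<le> m")
    case True
    then have "real (m - j) = real m - real j" "real (D - j) = real D - real j" using assms by auto
    moreover have "real j * real m \<le> real j * real D" using assms by (intro mult_left_mono) auto
    ultimately show ?thesis by (simp add: algebra_simps)
  qed simp
  have absorb: "real (Suc j) * real (a choose Suc j) = real (a - j) * real (a choose j)" for a
    by (metis binomial_absorb_comp binomial_absorption of_nat_mult)
  have "real (Suc j) * (real (m choose Suc j) * real D ^ Suc j)
      = (real (Suc j) * real (m choose Suc j)) * (real D ^ j * real D)"
    by (simp only: power_Suc mult_ac)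
  also have "\<dots> = (real (m choose j) * real D ^ j) * (real (m - j) * real D)"
    by (simp only: absorb mult_ac)
  also have "\<dots> \<le> (real (D choose j) * real m ^ j) * (real (D - j) * real m)"
    by (rule mult_mono[OF Suc.IH factor]) simp_all
  also have "\<dots> = (real (Suc j) * real (D choose Suc j)) * (real m ^ j * real m)"
    by (simp only: absorb mult_ac)
  also have "\<dots> = real (Suc j) * (real (D choose Suc j) * real m ^ Suc j)"
    by (simp only: power_Suc mult_ac)
  finally show ?case by (simp only: mult_le_cancel_left_pos of_nat_0_less_iff zero_less_Suc)
qed

lemma binomial_quotient_le_power:
  assumes "m \<le> D" "j \<le> D"
  shows "real (m choose j) / real (D choose j) \<le> (real m / real D) ^ j"
proof -
  have "real (D choose j) > 0" "real D ^ j > 0" using assms by auto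
  then show ?thesis using binomial_ratio_le_power[OF assms(1), of j]
    by (simp add: divide_le_eq power_divide field_simps)
qed

lemma power_le_exp_times_fact: "real s ^ s \<le> exp (real s) * fact s"
proof -
  have "(\<lambda>i. real s ^ i /\<^sub>R fact i) sums exp (real s)" by (rule exp_converges)
  then have "(\<Sum>i\<in>{s}. real s ^ i /\<^sub>R fact i) \<le> exp (real s)"
    by (intro sum_le_suminf[of _ "{s}", THEN order_trans]) (auto simp: sums_iff)
  then have "real s ^ s / fact s \<le> exp (real s)" by (simp add: divide_inverse_commute)
  then show ?thesis by (simp add: divide_le_eq mult.commute)
qed

lemma binomial_le_exp_power: "real (n choose s) \<le> (real n * exp 1 / real s) ^ s"
proof (cases "s = 0")
  case False
  have "real (n choose s) * fact s \<le> real n ^ s"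
    using binomial_fact_pow[of n s] by (metis of_nat_fact of_nat_le_iff of_nat_mult of_nat_power)
  then have "real (n choose s) * (real s ^ s / exp (real s)) \<le> real n ^ s"
    using power_le_exp_times_fact[of s]
    by (smt (verit, best) divide_le_eq exp_gt_zero mult_left_mono mult.commute of_nat_0_le_iff)
  moreover have "exp 1 ^ s = exp (real s)" by (simp add: exp_of_nat_mult[symmetric])
  ultimately show ?thesis using False by (simp add: power_divide power_mult_distrib field_simps)
qed simp

section \<open>Rotations and P\'osa's lemma\<close>

abbreviation rotate_at :: "nat \<Rightarrow> 'a list \<Rightarrow> 'a list" where
  "rotate_at i xs \<equiv> take (Suc i) xs @ rev (drop (Suc i) xs)"

lemma nth_rotate_at:
  assumes "i + 2 < length xs" "j < length xs"
  shows "rotate_at i xs ! j = (if j \<le> i then xs ! j else xs ! (length xs + i - j))"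
proof (cases "j \<le> i")
  case True
  then show ?thesis using assms by (simp add: nth_append)
next
  case False
  then have "rotate_at i xs ! j = rev (drop (Suc i) xs) ! (j - Suc i)"
    using assms by (simp add: nth_append)
  also have "\<dots> = xs ! (Suc i + (length xs - Suc i - 1 - (j - Suc i)))"
    using assms False by (simp add: rev_nth)
  also have "Suc i + (length xs - Suc i - 1 - (j - Suc i)) = length xs + i - j"
    using assms False by arith
  finally show ?thesis using False by simp
qed

lemma set_rotate_at: "set (rotate_at i xs) = set xs"
  by (metis append_take_drop_id set_append set_rev)

lemma distinct_rotate_at: "distinct (rotate_at i xs) = distinct xs"
  by (metis append_take_drop_id distinct_append distinct_rev set_rev)

lemma last_rotate_at:
  assumes "i + 2 < length xs"
  shows "last (rotate_at i xs) = xs ! Suc i"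
proof -
  have "\<not> length xs - 1 \<le> i" "length xs + i - (length xs - 1) = Suc i" using assms by auto
  then show ?thesis
    using assms nth_rotate_at[OF assms, of "length xs - 1"] by (subst last_conv_nth) auto
qed

lemma is_path_rotate_at:
  assumes sym: "\<And>x y. H x y = H y x" and p: "is_path H n xs" and i: "i + 2 < length xs"
    and e: "H (last xs) (xs ! i)"
  shows "is_path H n (rotate_at i xs)"
proof -
  have edge: "\<And>t. Suc t < length xs \<Longrightarrow> H (xs ! t) (xs ! Suc t)"
    using p by (simp add: is_path_def)
  have "H (rotate_at i xs ! j) (rotate_at i xs ! Suc j)" if j: "Suc j < length xs" for j
  proof -
    consider "Suc j \<le> i" | "j = i" | "j > i" by linarith
    then show ?thesis
    proof cases
      case 1
      then show ?thesis using nth_rotate_at[OF i, of j] nth_rotate_at[OF i, of "Suc j"] j edge[of j]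
        by simp
    next
      case 2
      have "last xs = xs ! (length xs - 1)" using i by (subst last_conv_nth) auto
      then show ?thesis using nth_rotate_at[OF i, of j] nth_rotate_at[OF i, of "Suc j"] j 2 e sym
        by (simp add: Suc_diff_Suc)
    next
      case 3
      have "length xs + i - j = Suc (length xs + i - Suc j)" using j 3 by simp
      then show ?thesis
        using nth_rotate_at[OF i, of j] nth_rotate_at[OF i, of "Suc j"] edge[of "length xs + i - Suc j"]
          sym j 3 by simp
    qed
  qed
  then show ?thesis using p unfolding is_path_def set_rotate_at distinct_rotate_at by auto
qed

definition path_adjacent :: "'a list \<Rightarrow> 'a \<Rightarrow> 'a \<Rightarrow> bool" where
  "path_adjacent Q a b \<longleftrightarrow>
     (\<exists>j. Suc j < length Q \<and> ((Q ! j = a \<and> Q ! Suc j = b) \<or> (Q ! j = b \<and> Q ! Suc j = a)))"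

lemma path_adjacent_rotate_at:
  assumes i: "i + 2 < length xs" and adj: "path_adjacent xs a b"
    and "a \<noteq> xs ! Suc i" "b \<noteq> xs ! Suc i"
  shows "path_adjacent (rotate_at i xs) a b"
proof -
  obtain t where t: "Suc t < length xs"
    and ab: "(xs ! t = a \<and> xs ! Suc t = b) \<or> (xs ! t = b \<and> xs ! Suc t = a)"
    using adj by (auto simp: path_adjacent_def)
  have "t \<noteq> i" using ab assms by auto
  then consider "t < i" | "t > i" by linarith
  then show ?thesis
  proof cases
    case 1
    then have "rotate_at i xs ! t = xs ! t" "rotate_at i xs ! Suc t = xs ! Suc t"
      using nth_rotate_at[OF i, of t] nth_rotate_at[OF i, of "Suc t"] t by auto
    then show ?thesis unfolding path_adjacent_def using t ab by (intro exI[of _ t]) simp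
  next
    case 2
    \<comment> \<open>the edge now sits, reversed, at position \<open>length xs + i - Suc t\<close>\<close>
    define j where "j = length xs + i - Suc t"
    have "Suc j < length xs" "\<not> j \<le> i" using 2 t i by (simp_all add: j_def)
    moreover have "length xs + i - j = Suc t" "length xs + i - Suc j = t"
      using 2 t by (simp_all add: j_def)
    ultimately have "rotate_at i xs ! j = xs ! Suc t" "rotate_at i xs ! Suc j = xs ! t"
      using nth_rotate_at[OF i, of j] nth_rotate_at[OF i, of "Suc j"] by auto
    then show ?thesis unfolding path_adjacent_def using \<open>Suc j < length xs\<close> ab
      by (intro exI[of _ j]) auto
  qed
qed

lemma path_adjacent_nth_cases:
  assumes "distinct Q" "j < length Q" "path_adjacent Q (Q ! j) x"
  shows "x = Q ! Suc j \<or> (0 < j \<and> x = Q ! (j - 1))"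
proof -
  obtain t where t: "Suc t < length Q"
    and "(Q ! t = Q ! j \<and> Q ! Suc t = x) \<or> (Q ! t = x \<and> Q ! Suc t = Q ! j)"
    using assms(3) by (auto simp: path_adjacent_def)
  then consider "t = j" "Q ! Suc t = x" | "Suc t = j" "Q ! t = x"
    using assms(1,2) by (metis Suc_lessD nth_eq_iff_index_eq)
  then show ?thesis by cases auto
qed

lemma longest_path_rotation:
  assumes sym: "\<And>x y. H x y = H y x" and lp: "longest_path H n xs" and r: "rotation H xs ys"
  shows "longest_path H n ys \<and> length ys = length xs \<and> set ys = set xs \<and> hd ys = hd xs"
proof -
  obtain i where i: "i + 2 < length xs" and "H (last xs) (xs ! i)" and ys: "ys = rotate_at i xs"
    using r by (auto simp: rotation_def)
  then have "is_path H n ys" using is_path_rotate_at[OF sym] lp by (auto simp: longest_path_def)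
  moreover have "set ys = set xs" using ys by (simp only: set_rotate_at)
  moreover have "length ys = length xs" "hd ys = hd xs" using ys i by (simp_all add: hd_append)
  ultimately show ?thesis using lp by (simp add: longest_path_def)
qed

text \<open>A rotation only breaks the edge at its new endpoint, which lies in \<open>EP H P\<close>.\<close>

lemma rotations_invariant:
  assumes sym: "\<And>x y. H x y = H y x" and lp: "longest_path H n P"
    and r: "(rotation H)\<^sup>*\<^sup>* P Q"
  shows "longest_path H n Q \<and> length Q = length P \<and> set Q = set P \<and> hd Q = hd P \<and>
     (\<forall>a b. path_adjacent P a b \<and> a \<notin> EP H P \<and> b \<notin> EP H P \<longrightarrow> path_adjacent Q a b)"
  using r
proof (induction rule: rtranclp_induct)
  case base
  then show ?case using lp by simp
next
  case (step Q Q')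
  obtain i where i: "i + 2 < length Q" and Q': "Q' = rotate_at i Q"
    using step.hyps(2) by (auto simp: rotation_def)
  have "last Q' \<in> EP H P" unfolding EP_def using step.hyps by (simp add: rtranclp.rtrancl_into_rtrancl)
  then have "Q ! Suc i \<in> EP H P" using last_rotate_at[OF i] Q' by simp
  then have "path_adjacent Q' a b"
    if "path_adjacent P a b" "a \<notin> EP H P" "b \<notin> EP H P" for a b
  proof -
    have "path_adjacent Q a b" using step.IH that by blast
    then show ?thesis using path_adjacent_rotate_at[OF i] that \<open>Q ! Suc i \<in> EP H P\<close> Q' by metis
  qed
  then show ?case using longest_path_rotation[OF sym _ step.hyps(2)] step.IH by auto
qed

lemma EP_subset_set:
  assumes sym: "\<And>x y. H x y = H y x" and lp: "longest_path H n P"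
  shows "EP H P \<subseteq> set P"
proof
  fix x assume "x \<in> EP H P"
  then obtain Q where r: "(rotation H)\<^sup>*\<^sup>* P Q" and x: "x = last Q" by (auto simp: EP_def)
  have "set Q = set P" "Q \<noteq> []"
    using rotations_invariant[OF sym lp r] by (auto simp: longest_path_def is_path_def)
  then show "x \<in> set P" using x by auto
qed

lemma rotation_endpoint_successor_in_EP:
  assumes sym: "\<And>x y. H x y = H y x" and lp: "longest_path H n P"
    and r: "(rotation H)\<^sup>*\<^sup>* P Q" and w: "w < n" "w \<notin> EP H P" and e: "H (last Q) w"
  obtains j where "Suc j < length Q" "Q ! j = w" "Q ! Suc j \<in> EP H P"
proof -
  have Q: "longest_path H n Q" "length Q = length P"
    using rotations_invariant[OF sym lp r] by auto
  then have Qp: "is_path H n Q" by (simp add: longest_path_def)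
  have lastQ: "last Q \<in> EP H P" using r by (auto simp: EP_def)
  have "w \<in> set Q"
  proof (rule ccontr)
    assume "w \<notin> set Q"
    then have "is_path H n (Q @ [w])" using Qp w e
      by (auto simp: is_path_def nth_append last_conv_nth less_Suc_eq) (metis diff_Suc_1 One_nat_def)
    then show False using lp Q by (auto simp: longest_path_def)
  qed
  then obtain j where j: "j < length Q" and wj: "Q ! j = w" by (auto simp: in_set_conv_nth)
  have "w \<noteq> last Q" using w lastQ by auto
  then have j1: "Suc j < length Q" using j wj by (metis Suc_lessI last_conv_nth diff_Suc_1 list.size(3) not_less0)
  have "Q ! Suc j \<in> EP H P"
  proof (cases "j + 2 < length Q")
    case True
    \<comment> \<open>rotating at the edge \<open>{last Q, w}\<close> makes the successor of \<open>w\<close> an endpoint\<close>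
    have "rotation H Q (rotate_at j Q)" unfolding rotation_def using True e wj by auto
    then have "last (rotate_at j Q) \<in> EP H P" using r by (auto simp: EP_def)
    then show ?thesis using last_rotate_at[OF True] by simp
  next
    case False
    then have "Suc j = length Q - 1" using j1 by simp
    moreover have "Q \<noteq> []" using j1 by auto
    ultimately show ?thesis using lastQ by (simp add: last_conv_nth)
  qed
  then show ?thesis using that j1 wj by blast
qed

definition path_nbhd :: "'a list \<Rightarrow> 'a set \<Rightarrow> 'a set" where
  "path_nbhd P R = {P ! (m - 1) | m. 0 < m \<and> m < length P \<and> P ! m \<in> R}
                 \<union> {P ! Suc m | m. Suc m < length P \<and> P ! m \<in> R}"

lemma card_path_nbhd_le:
  assumes "distinct P"
  shows "card (path_nbhd P R) \<le> 2 * card (R \<inter> set P)"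
proof -
  define I where "I = {m. m < length P \<and> P ! m \<in> R}"
  have fin: "finite I" by (simp add: I_def)
  have "card I \<le> card (R \<inter> set P)"
    using assms by (intro card_inj_on_le[where f = "(!) P"])
      (auto simp: I_def inj_on_def nth_eq_iff_index_eq)
  have "path_nbhd P R \<subseteq> (\<lambda>m. P ! (m - 1)) ` I \<union> (\<lambda>m. P ! Suc m) ` I"
    by (auto simp: path_nbhd_def I_def)
  then have "card (path_nbhd P R) \<le> card ((\<lambda>m. P ! (m - 1)) ` I) + card ((\<lambda>m. P ! Suc m) ` I)"
    using fin by (meson card_Un_le card_mono finite_UnI finite_imageI order_trans)
  also have "\<dots> \<le> card I + card I" using fin by (intro add_mono card_image_le)
  finally show ?thesis using \<open>card I \<le> _\<close> by linarith
qed

lemma neighbour_of_EP_in_path_nbhd: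
  assumes sym: "\<And>x y. H x y = H y x" and lp: "longest_path H n P"
    and w: "w < n" "w \<notin> EP H P" and u: "u \<in> EP H P" and uw: "H u w"
  shows "w \<in> path_nbhd P (EP H P)"
proof (rule ccontr)
  let ?R = "EP H P"
  assume nw: "w \<notin> path_nbhd P ?R"
  obtain Q where r: "(rotation H)\<^sup>*\<^sup>* P Q" and uQ: "u = last Q" using u by (auto simp: EP_def)
  have Q: "length Q = length P" "set Q = set P" "hd Q = hd P" "is_path H n Q"
    and adj: "\<And>a b. path_adjacent P a b \<Longrightarrow> a \<notin> ?R \<Longrightarrow> b \<notin> ?R \<Longrightarrow> path_adjacent Q a b"
    using rotations_invariant[OF sym lp r] by (auto simp: longest_path_def)
  have dQ: "distinct Q" and dP: "distinct P" and Pne: "P \<noteq> []"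
    using Q(4) lp by (auto simp: is_path_def longest_path_def)
  obtain j where j: "Suc j < length Q" and wj: "Q ! j = w" and sR: "Q ! Suc j \<in> ?R"
    using rotation_endpoint_successor_in_EP[OF sym lp r w] uw uQ by metis
  obtain m where m: "m < length P" and wm: "P ! m = w"
    using j wj Q(2) by (metis Suc_lessD in_set_conv_nth nth_mem)
  \<comment> \<open>a \<open>P\<close>-neighbour of \<open>w\<close> outside \<open>?R\<close> stays \<open>Q\<close>-adjacent to \<open>w\<close>; as the
    \<open>Q\<close>-successor of \<open>w\<close> lies in \<open>?R\<close>, it must be the \<open>Q\<close>-predecessor\<close>
  have Qpred: "0 < j \<and> x = Q ! (j - 1)" if "path_adjacent P w x" "x \<notin> ?R" for x
    using path_adjacent_nth_cases[OF dQ _ adj[OF that(1) w(2) that(2), folded wj]] j sR that(2)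
    by fastforce
  have "last P \<in> ?R" by (auto simp: EP_def)
  then have m1: "Suc m < length P" using m wm w(2) Pne by (metis Suc_lessI diff_Suc_1 last_conv_nth)
  have "P ! Suc m \<notin> ?R" using nw m1 wm unfolding path_nbhd_def by force
  moreover have "path_adjacent P w (P ! Suc m)" unfolding path_adjacent_def using m1 wm by auto
  ultimately have j0: "0 < j" and succ: "P ! Suc m = Q ! (j - 1)" using Qpred by auto
  show False
  proof (cases "m = 0")
    case True
    moreover have "Q \<noteq> []" using j by auto
    ultimately have "Q ! 0 = Q ! j" using Q(3) Pne wm wj by (simp add: hd_conv_nth)
    moreover have "0 < length Q" "j < length Q" using j by auto
    ultimately have "0 = j" using nth_eq_iff_index_eq[OF dQ] by blast
    then show False using j0 by simp
  next
    case False
    have "P ! (m - 1) \<notin> ?R" using nw m False wm unfolding path_nbhd_def by force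
    moreover have "path_adjacent P w (P ! (m - 1))" unfolding path_adjacent_def using m wm False
      by (intro exI[of _ "m - 1"]) auto
    ultimately have "P ! (m - 1) = P ! Suc m" using Qpred succ by auto
    then show False using dP m1 by (simp add: nth_eq_iff_index_eq)
  qed
qed

definition outer_nbhd :: "(nat \<Rightarrow> nat \<Rightarrow> bool) \<Rightarrow> nat \<Rightarrow> nat set \<Rightarrow> nat set" where
  "outer_nbhd H n S = {w. w < n \<and> w \<notin> S \<and> (\<exists>u\<in>S. H u w)}"

definition expands :: "(nat \<Rightarrow> nat \<Rightarrow> bool) \<Rightarrow> nat \<Rightarrow> real \<Rightarrow> bool" where
  "expands H n \<alpha> \<longleftrightarrow> (\<forall>S. S \<subseteq> {..<n} \<and> S \<noteq> {} \<and> real (card S) \<le> \<alpha> * real n \<longrightarrow>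
      2 * card S < card (outer_nbhd H n S))"

lemma card_EP_gt_if_expands:
  assumes sym: "\<And>x y. H x y = H y x" and ex: "expands H n \<alpha>" and lp: "longest_path H n P"
  shows "real (card (EP H P)) > \<alpha> * real n"
proof (rule ccontr)
  let ?R = "EP H P"
  assume "\<not> real (card ?R) > \<alpha> * real n"
  moreover have RP: "?R \<subseteq> set P" by (rule EP_subset_set[OF sym lp])
  moreover have "?R \<noteq> {}" by (auto simp: EP_def)
  moreover have "set P \<subseteq> {..<n}" using lp by (simp add: longest_path_def is_path_def)
  ultimately have "2 * card ?R < card (outer_nbhd H n ?R)"
    using ex unfolding expands_def by (meson not_less order_trans)
  also have "\<dots> \<le> card (path_nbhd P ?R)"
  proof (rule card_mono)
    show "finite (path_nbhd P ?R)" by (rule finite_subset[of _ "set P"]) (auto simp: path_nbhd_def)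
    show "outer_nbhd H n ?R \<subseteq> path_nbhd P ?R"
      using neighbour_of_EP_in_path_nbhd[OF sym lp] by (auto simp: outer_nbhd_def)
  qed
  also have "\<dots> \<le> 2 * card ?R"
    using card_path_nbhd_le[of P ?R] lp RP by (simp add: longest_path_def is_path_def Int_absorb2)
  finally show False by simp
qed

lemma longest_path_rev:
  assumes sym: "\<And>x y. H x y = H y x" and lp: "longest_path H n P"
  shows "longest_path H n (rev P)"
proof -
  have Pp: "is_path H n P" using lp by (simp add: longest_path_def)
  have "H (rev P ! i) (rev P ! Suc i)" if "Suc i < length P" for i
  proof -
    have "H (P ! (length P - Suc (Suc i))) (P ! Suc (length P - Suc (Suc i)))"
      using Pp that by (simp add: is_path_def)
    moreover have "Suc (length P - Suc (Suc i)) = length P - Suc i" using that by simp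
    ultimately show ?thesis using that sym by (simp add: rev_nth)
  qed
  then have "is_path H n (rev P)" using Pp by (auto simp: is_path_def)
  then show ?thesis using lp by (simp add: longest_path_def)
qed

lemma green_graph_sym: "green_graph \<omega> x y = green_graph \<omega> y x"
  by (auto simp: green_graph_def)

lemma card_EP_gt_if_green_expands:
  assumes "expands (green_graph \<omega>) n \<alpha>" "longest_path (green_graph \<omega>) n P"
  shows "real (card (EP (green_graph \<omega>) P)) > \<alpha> * real n \<and>
         real (card (EP (green_graph \<omega>) (rev P))) > \<alpha> * real n"
  using assms card_EP_gt_if_expands[of "green_graph \<omega>", OF green_graph_sym]
    longest_path_rev[of "green_graph \<omega>", OF green_graph_sym]
  by blast

section \<open>Green arcs of a single vertex\<close>

definition green_within :: "nat \<Rightarrow> nat set \<Rightarrow> (nat set \<times> nat) set" where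
  "green_within n T = {(S, b). \<forall>y\<in>S - {b}. y < n \<longrightarrow> y \<in> T}"

text \<open>A pointed \<open>Suc j\<close>-subset \<open>(S, b)\<close> with \<open>S - {b} \<subseteq> T\<close> is determined by \<open>b \<in> N\<close> and
  the \<open>j\<close>-subset \<open>S - {b}\<close> of \<open>N \<inter> T\<close>.\<close>

lemma card_pointed_subsets_le:
  assumes "finite N"
  shows "card (SIGMA S:{S. S \<subseteq> N \<and> card S = Suc j}. {b \<in> S. S - {b} \<subseteq> T})
           \<le> card N * (card (N \<inter> T) choose j)"
proof -
  let ?G = "{G. G \<subseteq> N \<inter> T \<and> card G = j}"
  have "card (SIGMA S:{S. S \<subseteq> N \<and> card S = Suc j}. {b \<in> S. S - {b} \<subseteq> T}) \<le> card (N \<times> ?G)"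
  proof (rule card_inj_on_le[where f = "\<lambda>(S, b). (b, S - {b})"])
    show "inj_on (\<lambda>(S, b). (b, S - {b})) (SIGMA S:{S. S \<subseteq> N \<and> card S = Suc j}. {b \<in> S. S - {b} \<subseteq> T})"
      by (auto simp: inj_on_def)
    show "(\<lambda>(S, b). (b, S - {b})) ` (SIGMA S:{S. S \<subseteq> N \<and> card S = Suc j}. {b \<in> S. S - {b} \<subseteq> T})
          \<subseteq> N \<times> ?G"
      using assms by (auto dest: finite_subset)
    show "finite (N \<times> ?G)" using assms by auto
  qed
  also have "card ?G = card (N \<inter> T) choose j" using assms by (intro n_subsets) simp
  then have "card (N \<times> ?G) = card N * (card (N \<inter> T) choose j)" by (simp add: card_cartesian_product)
  finally show ?thesis .
qed

lemma prob_vertex_choice_green_within: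
  assumes N: "nbhd E n x = N" and dk: "Suc j \<le> card N"
  shows "measure_pmf.prob (vertex_choice E n (Suc j) x) (green_within n T)
           \<le> real (card (N \<inter> T) choose j) / real ((card N - 1) choose j)"
proof -
  let ?K = "{S. S \<subseteq> N \<and> card S = Suc j}"
  let ?B = "\<lambda>S. {b \<in> S. S - {b} \<subseteq> T}"
  have fN: "finite N" and Nn: "N \<subseteq> {..<n}" using N by (auto simp: nbhd_def)
  have cK: "card ?K = card N choose Suc j" using fN by (simp add: n_subsets)
  then have "card ?K > 0" using dk by simp
  then have fK: "finite ?K" and Kne: "?K \<noteq> {}" by (auto simp: card_gt_0_iff)
  have fB: "finite (?B S)" if "S \<in> ?K" for S using that fN by (auto dest: finite_subset)
  have pS: "measure_pmf.prob (map_pmf (\<lambda>b. (S, b)) (pmf_of_set S)) (green_within n T)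
      = real (card (?B S)) / Suc j" if S: "S \<in> ?K" for S
  proof -
    have "finite S" "S \<noteq> {}" using S fN by (auto dest: finite_subset)
    moreover have "(\<lambda>b. (S, b)) -` green_within n T \<inter> S = ?B S"
      using S Nn by (auto simp: green_within_def)
    ultimately show ?thesis using S by (simp add: measure_pmf_of_set Int_commute)
  qed
  have "measure_pmf.prob (vertex_choice E n (Suc j) x) (green_within n T)
      = (\<Sum>S\<in>?K. real (card (?B S)) / Suc j) / card ?K"
    unfolding vertex_choice_def N measure_pmf_bind_pmf_of_set[OF fK Kne] using pS by simp
  also have "\<dots> = real (card (SIGMA S:?K. ?B S)) / Suc j / card ?K"
    using fK fB by (simp add: sum_divide_distrib card_SigmaI)
  also have "\<dots> \<le> real (card N * (card (N \<inter> T) choose j)) / Suc j / card ?K"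
  proof -
    have "real (card (SIGMA S:?K. ?B S)) \<le> real (card N * (card (N \<inter> T) choose j))"
      using card_pointed_subsets_le[OF fN, of j T] by (simp only: of_nat_le_iff)
    then show ?thesis by (intro divide_right_mono) auto
  qed
  also have "\<dots> = real (card (N \<inter> T) choose j) / real ((card N - 1) choose j)"
  proof -
    have "Suc j * (card N choose Suc j) = card N * ((card N - 1) choose j)"
      using dk Suc_times_binomial[of j "card N - 1"] by (cases "card N") auto
    then have "real (Suc j) * real (card ?K) = real (card N) * real ((card N - 1) choose j)"
      using cK by (metis of_nat_mult)
    moreover have "card N > 0" "((card N - 1) choose j) > 0" using dk by simp_all
    ultimately show ?thesis by (simp add: field_simps)
  qed
  finally show ?thesis .
qed

lemma prob_vertex_choice_green_within_le:
  assumes deg: "real (card (nbhd E n x)) \<ge> real n / 2"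
    and j: "j \<ge> 4" and n: "real n \<ge> 4 * real j + 8"
    and T: "card T \<le> 3 * s" "finite T" and s: "12 * real s \<le> real n"
  shows "measure_pmf.prob (vertex_choice E n (Suc j) x) (green_within n T) \<le> (12 * real s / real n) ^ 4"
proof -
  define N where "N = nbhd E n x"
  define d where "d = card N"
  have d1: "real (d - 1) \<ge> real n / 4" using deg n by (simp add: d_def N_def of_nat_diff)
  have m: "card (N \<inter> T) \<le> 3 * s" using T card_mono[of T "N \<inter> T"] by force
  have mD: "card (N \<inter> T) \<le> d - 1" and jD: "j \<le> d - 1" and dk: "Suc j \<le> d"
    using m s d1 n by linarith+
  have ratio: "real (card (N \<inter> T)) / real (d - 1) \<le> 12 * real s / real n"
  proof -
    have "real (card (N \<inter> T)) / real (d - 1) \<le> 3 * real s / (real n / 4)"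
      using m d1 n by (intro frac_le) auto
    then show ?thesis by simp
  qed
  have "measure_pmf.prob (vertex_choice E n (Suc j) x) (green_within n T)
      \<le> real (card (N \<inter> T) choose j) / real ((d - 1) choose j)"
    using prob_vertex_choice_green_within[OF N_def[symmetric]] dk by (simp add: d_def)
  also have "\<dots> \<le> (real (card (N \<inter> T)) / real (d - 1)) ^ j"
    by (rule binomial_quotient_le_power[OF mD jD])
  also have "\<dots> \<le> (real (card (N \<inter> T)) / real (d - 1)) ^ 4"
    using mD jD j by (intro power_decreasing) auto
  also have "\<dots> \<le> (12 * real s / real n) ^ 4"
    using ratio by (intro power_mono) auto
  finally show ?thesis .
qed

section \<open>Expansion of the green graph\<close>

definition all_green_within :: "nat \<Rightarrow> nat set \<Rightarrow> nat set \<Rightarrow> (nat \<Rightarrow> nat set \<times> nat) set" where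
  "all_green_within n S T = {\<omega>. \<forall>x\<in>S. \<omega> x \<in> green_within n T}"

lemma prob_all_green_within_le:
  assumes deg: "\<And>x. x < n \<Longrightarrow> real (card (nbhd E n x)) \<ge> real n / 2"
    and j: "j \<ge> 4" and n: "real n \<ge> 4 * real j + 8"
    and T: "card T \<le> 3 * s" "finite T" and s: "12 * real s \<le> real n"
    and S: "S \<subseteq> {..<n}" "card S = s"
  shows "measure_pmf.prob (random_D E n (Suc j)) (all_green_within n S T)
           \<le> ((12 * real s / real n) ^ 4) ^ s"
proof -
  define B where "B = (\<lambda>x. if x \<in> S then green_within n T else UNIV)"
  have "all_green_within n S T = Pi {..<n} B"
    using S by (auto simp: all_green_within_def B_def Pi_def)
  then have "measure_pmf.prob (random_D E n (Suc j)) (all_green_within n S T)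
     = (\<Prod>x\<in>{..<n}. measure_pmf.prob (vertex_choice E n (Suc j) x) (B x))"
    unfolding random_D_def by (simp add: measure_Pi_pmf_Pi)
  also have "\<dots> = (\<Prod>x\<in>S. measure_pmf.prob (vertex_choice E n (Suc j) x) (green_within n T))"
    using S by (subst prod.mono_neutral_right[of "{..<n}" S]) (auto simp: B_def)
  also have "\<dots> \<le> (\<Prod>x\<in>S. (12 * real s / real n) ^ 4)"
    using S by (intro prod_mono conjI prob_vertex_choice_green_within_le[OF _ j n T s] deg) auto
  also have "\<dots> = ((12 * real s / real n) ^ 4) ^ s" using S by simp
  finally show ?thesis .
qed

text \<open>The constant comes from \<open>n choose t \<le> (e n / t)^t\<close> applied to
  \<open>(n choose s) (n choose 2s) (12 s / n)^(4 s)\<close>.\<close>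

definition posa_const :: real where
  "posa_const = 12 ^ 4 * exp 3 / 4"

lemma posa_const_ge_3: "posa_const \<ge> 3"
proof -
  have "1 \<le> exp (3::real)" by simp
  then have "3 \<le> 5184 * exp (3::real)" by linarith
  then show ?thesis by (simp add: posa_const_def)
qed

lemma union_bound_term_le:
  assumes "s \<ge> 1" "n > 0"
  shows "real (n choose s) * real (n choose (2 * s)) * ((12 * real s / real n) ^ 4) ^ s
     \<le> (posa_const * real s / real n) ^ s"
proof -
  have "real (n choose s) * real (n choose (2 * s)) * ((12 * real s / real n) ^ 4) ^ s
     \<le> (real n * exp 1 / real s) ^ s * (real n * exp 1 / real (2 * s)) ^ (2 * s)
       * ((12 * real s / real n) ^ 4) ^ s"
    using binomial_le_exp_power[of n s] binomial_le_exp_power[of n "2 * s"]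
    by (intro mult_right_mono mult_mono) auto
  also have "\<dots> = ((real n * exp 1 / real s) * (real n * exp 1 / real (2 * s)) ^ 2
                    * (12 * real s / real n) ^ 4) ^ s"
    by (simp only: power_mult power_mult_distrib)
  also have "(real n * exp 1 / real s) * (real n * exp 1 / real (2 * s)) ^ 2
               * (12 * real s / real n) ^ 4 = posa_const * real s / real n"
  proof -
    have "exp 1 ^ 3 = exp (3::real)" by (simp add: exp_of_nat_mult[symmetric])
    then show ?thesis using assms by (simp add: posa_const_def field_simps eval_nat_numeral)
  qed
  finally show ?thesis .
qed

lemma union_bound_sum_le:
  assumes M: "4 * posa_const * real M \<le> real n" and n: "n > 0"
  shows "(\<Sum>s\<in>{1..M}. (posa_const * real s / real n) ^ s) \<le> 2 * posa_const / real n"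
proof -
  let ?c = posa_const
  have term_le: "(?c * real s / real n) ^ s \<le> (?c / real n) * (1/2) ^ (s - 1)" if "s \<in> {1..M}" for s
  proof -
    have s: "1 \<le> s" "s \<le> M" using that by auto
    have "?c * real s \<le> ?c * real M" using s posa_const_ge_3 by (intro mult_left_mono) auto
    then have "?c * real s \<le> real n / 4" using M by linarith
    then have q: "?c * real s / real n \<le> 1/4" using n by (simp add: divide_le_eq)
    have "s - 1 < 2 ^ (s - 1)" by (rule less_exp)
    then have "s \<le> 2 ^ (s - 1)" using s by arith
    then have two: "real s * (1/4) ^ (s - 1) \<le> (1/2) ^ (s - 1)"
      using mult_right_mono[of "real s" "2 ^ (s - 1)" "(1/4::real) ^ (s - 1)"]
      by (simp add: power_mult_distrib[symmetric])
    have "(?c * real s / real n) ^ s = (?c * real s / real n) * (?c * real s / real n) ^ (s - 1)"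
      using s by (simp add: power_eq_if)
    also have "\<dots> \<le> (?c * real s / real n) * (1/4) ^ (s - 1)"
      using q posa_const_ge_3 by (intro mult_left_mono power_mono) auto
    also have "\<dots> = (?c / real n) * (real s * (1/4) ^ (s - 1))" by simp
    also have "\<dots> \<le> (?c / real n) * (1/2) ^ (s - 1)"
      using two posa_const_ge_3 by (intro mult_left_mono) auto
    finally show ?thesis .
  qed
  have "(\<Sum>s\<in>{1..M}. (?c * real s / real n) ^ s) \<le> (\<Sum>s\<in>{1..M}. (?c / real n) * (1/2) ^ (s - 1))"
    by (rule sum_mono[OF term_le])
  also have "\<dots> = (?c / real n) * (\<Sum>s\<in>{1..M}. (1/2) ^ (s - 1))"
    by (rule sum_distrib_left[symmetric])
  also have "(\<Sum>s\<in>{1..M}. (1/2::real) ^ (s - 1)) = (\<Sum>i<M. (1/2) ^ i)"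
    by (simp add: sum.atLeast1_atMost_eq)
  also have "\<dots> \<le> 2" by (simp add: sum_gp_strict)
  finally show ?thesis using posa_const_ge_3 n by (simp add: mult_left_mono field_simps)
qed

text \<open>Any \<open>2 |S|\<close>-set \<open>U\<close> containing the outer neighbourhood of \<open>S\<close> will do.\<close>

lemma not_expands_imp_all_green_within:
  assumes "\<not> expands (green_graph \<omega>) n \<alpha>" and "4 * \<alpha> \<le> 1"
  obtains S U where "S \<subseteq> {..<n}" "S \<noteq> {}" "real (card S) \<le> \<alpha> * real n"
    "U \<subseteq> {..<n}" "card U = 2 * card S" "\<omega> \<in> all_green_within n S (S \<union> U)"
proof -
  obtain S where S: "S \<subseteq> {..<n}" "S \<noteq> {}" "real (card S) \<le> \<alpha> * real n"
    and nc: "card (outer_nbhd (green_graph \<omega>) n S) \<le> 2 * card S"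
    using assms(1) unfolding expands_def by (auto simp: not_less)
  have "4 * \<alpha> * real n \<le> real n" using mult_right_mono[OF assms(2) of_nat_0_le_iff[of n]] by simp
  then have "2 * card S \<le> n" using S(3) by linarith
  moreover have "outer_nbhd (green_graph \<omega>) n S \<subseteq> {..<n}" by (auto simp: outer_nbhd_def)
  ultimately obtain U where U: "outer_nbhd (green_graph \<omega>) n S \<subseteq> U" "U \<subseteq> {..<n}" "card U = 2 * card S"
    using exists_subset_between[of "outer_nbhd (green_graph \<omega>) n S" "2 * card S" "{..<n}"] nc by auto
  have "y \<in> S \<union> U" if "x \<in> S" "y \<in> fst (\<omega> x) - {snd (\<omega> x)}" "y < n" for x y
  proof -
    have "green_graph \<omega> x y" using that(2) by (simp add: green_graph_def)
    then show ?thesis using that U(1) by (auto simp: outer_nbhd_def)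
  qed
  then have "\<omega> \<in> all_green_within n S (S \<union> U)"
    by (simp add: all_green_within_def green_within_def case_prod_beta)
  then show ?thesis using that S U by blast
qed

lemma prob_all_green_within_level_le:
  assumes deg: "\<And>x. x < n \<Longrightarrow> real (card (nbhd E n x)) \<ge> real n / 2"
    and j: "j \<ge> 4" and n: "real n \<ge> 4 * real j + 8" and s: "12 * real s \<le> real n"
  shows "measure_pmf.prob (random_D E n (Suc j))
           (\<Union>S\<in>{S. S \<subseteq> {..<n} \<and> card S = s}. \<Union>U\<in>{U. U \<subseteq> {..<n} \<and> card U = 2 * s}.
              all_green_within n S (S \<union> U))
         \<le> real (n choose s) * real (n choose (2 * s)) * ((12 * real s / real n) ^ 4) ^ s"
proof -
  let ?p = "random_D E n (Suc j)"
  let ?Ss = "{S. S \<subseteq> {..<n} \<and> card S = s}" and ?Us = "{U. U \<subseteq> {..<n} \<and> card U = 2 * s}"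
  have fin: "finite ?Ss" "finite ?Us" by (auto intro: finite_subset[of _ "Pow {..<n}"])
  have "measure_pmf.prob ?p (\<Union>S\<in>?Ss. \<Union>U\<in>?Us. all_green_within n S (S \<union> U))
      \<le> (\<Sum>S\<in>?Ss. \<Sum>U\<in>?Us. measure_pmf.prob ?p (all_green_within n S (S \<union> U)))"
    using fin by (intro order_trans[OF measure_UNION_le] sum_mono measure_UNION_le) auto
  also have "\<dots> \<le> (\<Sum>S\<in>?Ss. \<Sum>U\<in>?Us. ((12 * real s / real n) ^ 4) ^ s)"
  proof (intro sum_mono)
    fix S U assume S: "S \<in> ?Ss" and U: "U \<in> ?Us"
    then have "card (S \<union> U) \<le> 3 * s" "finite (S \<union> U)"
      using card_Un_le[of S U] by (auto dest: finite_subset)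
    then show "measure_pmf.prob ?p (all_green_within n S (S \<union> U)) \<le> ((12 * real s / real n) ^ 4) ^ s"
      using prob_all_green_within_le[OF deg j n _ _ s] S by auto
  qed
  also have "\<dots> = real (n choose s) * real (n choose (2 * s)) * ((12 * real s / real n) ^ 4) ^ s"
    by (simp add: n_subsets)
  finally show ?thesis .
qed

lemma prob_not_expands_le:
  assumes deg: "\<And>x. x < n \<Longrightarrow> real (card (nbhd E n x)) \<ge> real n / 2"
    and j: "j \<ge> 4" and n: "real n \<ge> 4 * real j + 8"
  shows "measure_pmf.prob (random_D E n (Suc j))
           {\<omega>. \<not> expands (green_graph \<omega>) n (1 / (4 * posa_const))} \<le> 2 * posa_const / real n"
proof -
  define \<alpha> where "\<alpha> = 1 / (4 * posa_const)"
  define M where "M = nat \<lfloor>\<alpha> * real n\<rfloor>"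
  let ?p = "random_D E n (Suc j)"
  let ?level = "\<lambda>s. \<Union>S\<in>{S. S \<subseteq> {..<n} \<and> card S = s}. \<Union>U\<in>{U. U \<subseteq> {..<n} \<and> card U = 2 * s}.
                      all_green_within n S (S \<union> U)"
  have \<alpha>: "0 \<le> \<alpha>" "4 * \<alpha> \<le> 1" "12 * \<alpha> \<le> 1"
    using posa_const_ge_3 by (auto simp: \<alpha>_def field_simps)
  have M: "real M \<le> \<alpha> * real n" using \<alpha> by (simp add: M_def of_nat_floor)
  have "{\<omega>. \<not> expands (green_graph \<omega>) n \<alpha>} \<subseteq> (\<Union>s\<in>{1..M}. ?level s)"
  proof
    fix \<omega> assume "\<omega> \<in> {\<omega>. \<not> expands (green_graph \<omega>) n \<alpha>}"
    then obtain S U where "S \<subseteq> {..<n}" "S \<noteq> {}" "real (card S) \<le> \<alpha> * real n"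
      "U \<subseteq> {..<n}" "card U = 2 * card S" "\<omega> \<in> all_green_within n S (S \<union> U)"
      using not_expands_imp_all_green_within \<alpha>(2) by (metis mem_Collect_eq)
    moreover from this have "card S \<in> {1..M}"
      by (auto simp: M_def le_nat_floor Suc_le_eq card_gt_0_iff dest: finite_subset)
    ultimately show "\<omega> \<in> (\<Union>s\<in>{1..M}. ?level s)" by blast
  qed
  then have "measure_pmf.prob ?p {\<omega>. \<not> expands (green_graph \<omega>) n \<alpha>}
      \<le> (\<Sum>s\<in>{1..M}. measure_pmf.prob ?p (?level s))"
    by (intro order_trans[OF measure_pmf.finite_measure_mono measure_UNION_le]) auto
  also have "\<dots> \<le> (\<Sum>s\<in>{1..M}. (posa_const * real s / real n) ^ s)"
  proof (intro sum_mono order_trans[OF prob_all_green_within_level_le[OF deg j n]] union_bound_term_le)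
    fix s assume "s \<in> {1..M}"
    then show "12 * real s \<le> real n" "1 \<le> s"
      using M \<alpha>(3) mult_right_mono[of "12 * \<alpha>" 1 "real n"] by auto
  qed (use n in auto)
  also have "\<dots> \<le> 2 * posa_const / real n"
    using M n posa_const_ge_3 by (intro union_bound_sum_le) (auto simp: \<alpha>_def field_simps)
  finally show ?thesis unfolding \<alpha>_def .
qed

lemma prob_long_EP_ge:
  assumes deg: "\<And>x. x < n \<Longrightarrow> real (card (nbhd E n x)) \<ge> real n / 2"
    and j: "j \<ge> 4" and n: "real n \<ge> 4 * real j + 8"
  shows "measure_pmf.prob (random_D E n (Suc j))
           {\<omega>. \<forall>P. longest_path (green_graph \<omega>) n P \<longrightarrow>
                real (card (EP (green_graph \<omega>) P)) > 1 / (4 * posa_const) * real n \<and>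
                real (card (EP (green_graph \<omega>) (rev P))) > 1 / (4 * posa_const) * real n}
         \<ge> 1 - 2 * posa_const / real n" (is "measure_pmf.prob ?p ?Long \<ge> _")
proof -
  let ?Ex = "{\<omega>. expands (green_graph \<omega>) n (1 / (4 * posa_const))}"
  have "measure_pmf.prob ?p (space (measure_pmf ?p) - ?Ex) = 1 - measure_pmf.prob ?p ?Ex"
    by (rule measure_pmf.prob_compl) simp
  moreover have "space (measure_pmf ?p) - ?Ex = {\<omega>. \<not> expands (green_graph \<omega>) n (1 / (4 * posa_const))}"
    by auto
  ultimately have "1 - 2 * posa_const / real n \<le> measure_pmf.prob ?p ?Ex"
    using prob_not_expands_le[OF deg j n] by simp
  also have "\<dots> \<le> measure_pmf.prob ?p ?Long"
  proof (rule measure_pmf.finite_measure_mono)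
    show "?Ex \<subseteq> ?Long" using card_EP_gt_if_green_expands by blast
  qed simp
  finally show ?thesis .
qed

theorem lemma6:
  fixes \<epsilon> :: real and k :: nat
  assumes "\<epsilon> > 0" and "k \<ge> 5"
  shows "\<exists>\<alpha>>0. \<forall>\<delta>>0. \<exists>N. \<forall>n\<ge>N. \<forall>E.
           simple_graph E n \<and> min_degree_at_least E n ((1/2 + \<epsilon>) * real n) \<longrightarrow>
           measure_pmf.prob (random_D E n k)
             {\<omega>. \<forall>P. longest_path (green_graph \<omega>) n P \<longrightarrow>
                  real (card (EP (green_graph \<omega>) P)) > \<alpha> * real n \<and>
                  real (card (EP (green_graph \<omega>) (rev P))) > \<alpha> * real n}
           \<ge> 1 - \<delta>"
proof -
  obtain j where k: "k = Suc j" and j: "j \<ge> 4"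
    using assms(2) by (intro that[of "k - 1"]) auto
  have "measure_pmf.prob (random_D E n k)
          {\<omega>. \<forall>P. longest_path (green_graph \<omega>) n P \<longrightarrow>
             real (card (EP (green_graph \<omega>) P)) > 1 / (4 * posa_const) * real n \<and>
             real (card (EP (green_graph \<omega>) (rev P))) > 1 / (4 * posa_const) * real n}
        \<ge> 1 - \<delta>"
    if "\<delta> > 0" "n \<ge> nat \<lceil>2 * posa_const / \<delta> + 4 * real j + 8\<rceil>"
      and G: "min_degree_at_least E n ((1/2 + \<epsilon>) * real n)" for \<delta> n E
  proof -
    have "2 * posa_const / \<delta> \<ge> 0" using posa_const_ge_3 \<open>\<delta> > 0\<close> by simp
    then have nj: "real n \<ge> 4 * real j + 8" and "2 * posa_const / \<delta> \<le> real n" using that(2) by linarith+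
    then have "2 * posa_const / real n \<le> \<delta>" using \<open>\<delta> > 0\<close> by (simp add: divide_le_eq mult.commute)
    moreover have "real (card (nbhd E n x)) \<ge> real n / 2" if "x < n" for x
    proof -
      have "\<epsilon> * real n + real n / 2 \<le> real (card (nbhd E n x))"
        using G that by (simp add: min_degree_at_least_def algebra_simps)
      moreover have "0 \<le> \<epsilon> * real n" using assms(1) by simp
      ultimately show ?thesis by linarith
    qed
    ultimately show ?thesis using prob_long_EP_ge[OF _ j nj] unfolding k by fastforce
  qed
  moreover have "1 / (4 * posa_const) > 0" using posa_const_ge_3 by simp
  ultimately show ?thesis by blast
qed

end
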